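(* Let $n\in\mathbb{N}$ and let $\mathbf{s}=(s_0,\ldots,s_n)\subset[0,\infty)$ be positive on $(0,\infty)$. The following are equivalent: (i) $\mathbf{s}$ is strictly positive on $(0,\infty)$; (ii) $\mathrm{ind}_\infty(\mathbf{s})=\left\lceil\frac{n+1}{2}\right\rceil$; (iii) $\mathbf{s}$ is indeterminate on $(0,\infty)$.
   Context: For $a<b$ and $\mathbf{s}=(s_0,\ldots,s_n)$ let $\sigma:\mathbb{R}_n[x]\to\mathbb{R}$ be linear with $\sigma(x^k)=s_k$. $\mathbf{s}$ is positive on $[a,b]$ if $\sigma(P)\ge0$ for every real polynomial $P$ of degree $\le n$ nonnegative on $[a,b]$, and strictly positive on $[a,b]$ if moreover $\sigma(P)>0$ for every such $P$ not identically zero. $\mathbf{s}\subset[0,\infty)$ is positive (resp. strictly positive) on $(0,\infty)$ if it is positive (resp. strictly positive) on some interval $[a,b]\subset(0,\infty)$. $\mathcal{M}_\infty(\mathbf{s})$ denotes the set of positive Borel measures $\mu$ on $(0,\infty)$ with $\mathrm{supp}\,\mu$ contained in some compact $[a,b]\subset(0,\infty)$ and $\int t^kd\mu=s_k$ for $k=0,\ldots,n$; $\mathbf{s}$ is determinate on $(0,\infty)$ if $\mathcal{M}_\infty(\mathbf{s})$ has exactly one element, indeterminate if it has more than one. $\mathrm{ind}_\infty(\mathbf{s})=\min\{\#\mathrm{supp}\,\mu:\mu\in\mathcal{M}_\infty(\mathbf{s})\}$. *)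

theory Defs
  imports "HOL-Analysis.Analysis" "HOL-Computational_Algebra.Polynomial" "HOL-Library.Extended_Nat"
begin

definition riesz :: "(nat \<Rightarrow> real) \<Rightarrow> real poly \<Rightarrow> real" where
  "riesz s P = (\<Sum>k\<le>degree P. coeff P k * s k)"

definition positive_on :: "nat \<Rightarrow> (nat \<Rightarrow> real) \<Rightarrow> real \<Rightarrow> real \<Rightarrow> bool" where
  "positive_on n s a b \<longleftrightarrow>
     (\<forall>P::real poly. degree P \<le> n \<and> (\<forall>x\<in>{a..b}. poly P x \<ge> 0) \<longrightarrow> riesz s P \<ge> 0)"

definition strictly_positive_on :: "nat \<Rightarrow> (nat \<Rightarrow> real) \<Rightarrow> real \<Rightarrow> real \<Rightarrow> bool" where
  "strictly_positive_on n s a b \<longleftrightarrow> positive_on n s a b \<and>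
     (\<forall>P::real poly. degree P \<le> n \<and> (\<forall>x\<in>{a..b}. poly P x \<ge> 0) \<and> P \<noteq> 0 \<longrightarrow> riesz s P > 0)"

definition positive_pos :: "nat \<Rightarrow> (nat \<Rightarrow> real) \<Rightarrow> bool" where
  "positive_pos n s \<longleftrightarrow> (\<exists>a b. 0 < a \<and> a < b \<and> positive_on n s a b)"

definition strictly_positive_pos :: "nat \<Rightarrow> (nat \<Rightarrow> real) \<Rightarrow> bool" where
  "strictly_positive_pos n s \<longleftrightarrow> (\<exists>a b. 0 < a \<and> a < b \<and> strictly_positive_on n s a b)"

definition msupp :: "real measure \<Rightarrow> real set" where
  "msupp \<mu> = {x. \<forall>e>0. emeasure \<mu> (ball x e) > 0}"

definition reps_pos :: "nat \<Rightarrow> (nat \<Rightarrow> real) \<Rightarrow> real measure set" where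
  "reps_pos n s = {\<mu>. sets \<mu> = sets borel \<and>
      (\<exists>a b. 0 < a \<and> a \<le> b \<and> msupp \<mu> \<subseteq> {a..b}) \<and>
      (\<forall>k\<le>n. integrable \<mu> (\<lambda>t. t ^ k) \<and> (\<integral>t. t ^ k \<partial>\<mu>) = s k)}"

definition determinate_pos :: "nat \<Rightarrow> (nat \<Rightarrow> real) \<Rightarrow> bool" where
  "determinate_pos n s \<longleftrightarrow> (\<exists>!\<mu>. \<mu> \<in> reps_pos n s)"

definition indeterminate_pos :: "nat \<Rightarrow> (nat \<Rightarrow> real) \<Rightarrow> bool" where
  "indeterminate_pos n s \<longleftrightarrow> (\<exists>\<mu> \<nu>. \<mu> \<in> reps_pos n s \<and> \<nu> \<in> reps_pos n s \<and> \<mu> \<noteq> \<nu>)"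

definition ind_pos :: "nat \<Rightarrow> (nat \<Rightarrow> real) \<Rightarrow> enat" where
  "ind_pos n s = (INF \<mu>\<in>reps_pos n s. if finite (msupp \<mu>) then enat (card (msupp \<mu>)) else \<infinity>)"

end

(* Strict positivity of s on [a, b] makes (p, q) |-> riesz s (p * q) an inner product on
   polynomials of degree <= n/2, so monic orthogonal polynomials exist and have simple zeros in
   (a, b).  Multiplying the functional by a factor r >= 0 on [a, b] whose zeros R lie outside
   (a, b), and adding to R the Gauss nodes of the new functional, gives quadrature rules with
   positive weights, i.e. atomic representing measures: a Gauss (n odd) or Gauss-Radau (n even)
   rule with ceil((n + 1) / 2) nodes, and a second rule containing the endpoint b.  No
   representing measure has at most n/2 atoms, since the square of its node polynomial would be
   annihilated.  If positivity is not strict, some nonzero P >= 0 of degree <= n has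
   riesz s P = 0; every representing measure then lives on the at most n/2 zeros of P in the
   interval, so it has fewer than ceil((n + 1) / 2) atoms and, by Lagrange interpolation, is
   determined by the moments. *)

theory Submission
  imports Defs
begin

section \<open>The Riesz functional\<close>

lemma riesz_eq_sum_atMost:
  assumes "degree P \<le> N"
  shows "riesz s P = (\<Sum>k\<le>N. coeff P k * s k)"
proof -
  have "(\<Sum>k\<le>N. coeff P k * s k) = (\<Sum>k\<le>degree P. coeff P k * s k)"
    by (rule sum.mono_neutral_right) (use assms in \<open>auto intro!: coeff_eq_0\<close>)
  then show ?thesis by (simp add: riesz_def)
qed

lemma riesz_0 [simp]: "riesz s 0 = 0"
  by (simp add: riesz_def)

lemma riesz_add: "riesz s (p + q) = riesz s p + riesz s q"
proof -
  define N where "N = max (degree p) (degree q)"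
  have "degree (p + q) \<le> N"
    unfolding N_def by (rule degree_add_le) auto
  then have "riesz s (p + q) = (\<Sum>k\<le>N. coeff p k * s k) + (\<Sum>k\<le>N. coeff q k * s k)"
    by (simp add: riesz_eq_sum_atMost distrib_right sum.distrib)
  also have "\<dots> = riesz s p + riesz s q"
    by (subst (1 2) riesz_eq_sum_atMost[symmetric]) (auto simp: N_def)
  finally show ?thesis .
qed

lemma riesz_smult: "riesz s (smult c p) = c * riesz s p"
  by (simp add: riesz_eq_sum_atMost[of "smult c p" "degree p"] riesz_def sum_distrib_left mult.assoc)

lemma riesz_minus: "riesz s (- p) = - riesz s p"
  using riesz_smult[of s "-1" p] by simp

lemma riesz_diff: "riesz s (p - q) = riesz s p - riesz s q"
  using riesz_add[of s p "- q"] by (simp add: riesz_minus)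

lemma riesz_sum: "riesz s (\<Sum>i\<in>A. f i) = (\<Sum>i\<in>A. riesz s (f i))"
  by (induction A rule: infinite_finite_induct) (auto simp: riesz_add)

lemma riesz_monom: "riesz s (monom 1 k) = s k"
proof -
  have "(\<Sum>i\<le>k. coeff (monom 1 k) i * s i) = (\<Sum>i\<le>k. if i = k then s i else 0)"
    by (rule sum.cong) (auto simp: coeff_monom)
  then show ?thesis by (simp add: riesz_def degree_monom_eq)
qed

definition mult_moments :: "real poly \<Rightarrow> (nat \<Rightarrow> real) \<Rightarrow> nat \<Rightarrow> real" where
  "mult_moments r s j = riesz s (r * monom 1 j)"

lemma riesz_mult_moments: "riesz (mult_moments r s) g = riesz s (r * g)"
proof -
  have "r * g = r * (\<Sum>i\<le>degree g. monom (coeff g i) i)"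
    by (simp add: poly_as_sum_of_monoms)
  also have "\<dots> = (\<Sum>i\<le>degree g. smult (coeff g i) (r * monom 1 i))"
    by (simp add: sum_distrib_left smult_monom[symmetric] del: smult_monom)
       (metis mult_smult_right smult_monom mult.commute mult_1)
  finally have "riesz s (r * g) = (\<Sum>i\<le>degree g. coeff g i * riesz s (r * monom 1 i))"
    by (simp add: riesz_sum riesz_smult)
  then show ?thesis
    by (simp add: riesz_def mult_moments_def mult.commute)
qed

lemma strictly_positive_on_iff:
  "strictly_positive_on n s a b \<longleftrightarrow>
     (\<forall>P. degree P \<le> n \<longrightarrow> P \<noteq> 0 \<longrightarrow> (\<forall>x\<in>{a..b}. 0 \<le> poly P x) \<longrightarrow> 0 < riesz s P)"
  unfolding strictly_positive_on_def positive_on_def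
  by (metis order.refl order_less_imp_le riesz_0)

lemma riesz_mult_moments_pos:
  assumes "strictly_positive_on n s a b"
    and "\<forall>x\<in>{a..b}. 0 \<le> poly r x" "r \<noteq> 0"
    and "degree P + degree r \<le> n" "P \<noteq> 0" "\<forall>x\<in>{a..b}. 0 \<le> poly P x"
  shows "0 < riesz (mult_moments r s) P"
  using assms by (simp add: riesz_mult_moments strictly_positive_on_iff degree_mult_eq add.commute)

section \<open>Node polynomials and Lagrange interpolation\<close>

definition node_poly :: "real set \<Rightarrow> real poly" where
  "node_poly Z = (\<Prod>z\<in>Z. [:-z, 1:])"

lemma poly_node_poly: "poly (node_poly Z) x = (\<Prod>z\<in>Z. x - z)"
  by (simp add: node_poly_def poly_prod)

lemma node_poly_nonzero [simp]: "node_poly Z \<noteq> 0"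
  by (cases "finite Z") (auto simp: node_poly_def prod_zero_iff)

lemma degree_node_poly: "finite Z \<Longrightarrow> degree (node_poly Z) = card Z"
  by (simp add: node_poly_def degree_prod_eq_sum_degree)

lemma lead_coeff_node_poly: "lead_coeff (node_poly Z) = 1"
  by (simp add: node_poly_def lead_coeff_prod)

lemma poly_node_poly_eq_0_iff: "finite Z \<Longrightarrow> poly (node_poly Z) x = 0 \<longleftrightarrow> x \<in> Z"
  by (simp add: poly_node_poly prod_zero_iff)

lemma node_poly_insert: "finite Z \<Longrightarrow> z \<notin> Z \<Longrightarrow> node_poly (insert z Z) = [:-z, 1:] * node_poly Z"
  by (simp add: node_poly_def)

lemma order_node_poly:
  assumes "finite Z"
  shows "order z (node_poly Z) = (if z \<in> Z then 1 else 0)"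
proof (cases "z \<in> Z")
  case True
  then have "node_poly Z = [:-z, 1:] * node_poly (Z - {z})"
    using assms node_poly_insert[of "Z - {z}" z] by (simp add: insert_absorb)
  moreover have "order z (node_poly (Z - {z})) = 0"
    by (rule order_0I) (simp add: assms poly_node_poly_eq_0_iff)
  moreover have "order z [:-z, 1:] = 1"
    using order_power_n_n[of z 1] by simp
  ultimately show ?thesis
    using True order_mult[of "[:-z, 1:]" "node_poly (Z - {z})" z] by (simp del: mult_pCons_left)
next
  case False
  then show ?thesis by (auto intro!: order_0I simp: assms poly_node_poly_eq_0_iff)
qed

lemma node_poly_dvd:
  assumes "finite Z" "\<forall>z\<in>Z. poly f z = 0"
  shows "node_poly Z dvd f"
  using assms
proof (induction Z arbitrary: f rule: finite_induct)
  case empty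
  then show ?case by (simp add: node_poly_def)
next
  case (insert z Z)
  then obtain g where g: "f = node_poly Z * g"
    by (meson dvd_def insert_iff)
  have "poly g z = 0"
    using insert g by (simp add: poly_node_poly_eq_0_iff)
  then obtain h where "g = [:-z, 1:] * h"
    by (metis dvdE poly_eq_0_iff_dvd)
  then have "f = node_poly (insert z Z) * h"
    using g by (simp only: node_poly_insert[OF insert(1,2)] ac_simps)
  then show ?case by simp
qed

lemma node_poly_square_dvd:
  assumes "finite Z" "\<forall>z\<in>Z. [:-z, 1:]^2 dvd f"
  shows "(node_poly Z)^2 dvd f"
  using assms
proof (induction Z arbitrary: f rule: finite_induct)
  case empty
  then show ?case by (simp add: node_poly_def)
next
  case (insert z Z)
  show ?case
  proof (cases "f = 0")
    case False
    obtain g where g: "f = (node_poly Z)^2 * g"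
      using insert by (meson dvd_def insert_iff)
    have "order z ((node_poly Z)^2) = 0"
      using insert by (intro order_0I) (simp add: poly_node_poly_eq_0_iff)
    then have "order z g = order z f"
      using g False order_mult[of "(node_poly Z)^2" g z] by simp
    moreover have "2 \<le> order z f"
      using insert(4) False order_divides by auto
    ultimately obtain h where "g = [:-z, 1:]^2 * h"
      by (metis dvdE order_divides)
    then have "f = (node_poly (insert z Z))^2 * h"
      using g by (simp only: node_poly_insert[OF insert(1,2)] power_mult_distrib ac_simps)
    then show ?thesis by simp
  qed simp
qed

definition lagrange_basis :: "real set \<Rightarrow> real \<Rightarrow> real poly" where
  "lagrange_basis Y y = smult (inverse (\<Prod>y'\<in>Y - {y}. y - y')) (node_poly (Y - {y}))"

lemma poly_lagrange_basis:
  assumes "finite Y" "y \<in> Y" "x \<in> Y"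
  shows "poly (lagrange_basis Y y) x = (if x = y then 1 else 0)"
proof (cases "x = y")
  case True
  have "(\<Prod>y'\<in>Y - {y}. y - y') \<noteq> 0"
    using assms by (simp add: prod_zero_iff)
  then show ?thesis
    using True by (simp add: lagrange_basis_def poly_node_poly)
next
  case False
  then show ?thesis
    using assms by (simp add: lagrange_basis_def poly_node_poly_eq_0_iff)
qed

lemma degree_lagrange_basis:
  assumes "finite Y" "y \<in> Y"
  shows "degree (lagrange_basis Y y) \<le> card Y - 1"
  using assms by (simp add: lagrange_basis_def degree_node_poly)

lemma riesz_eq_interpolation_sum:
  assumes Y: "finite Y" "card Y \<le> N + 1"
    and vanish: "\<And>f. degree f \<le> N \<Longrightarrow> \<forall>y\<in>Y. poly f y = 0 \<Longrightarrow> riesz s f = 0"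
    and f: "degree f \<le> N"
  shows "riesz s f = (\<Sum>y\<in>Y. riesz s (lagrange_basis Y y) * poly f y)"
proof -
  define g where "g = f - (\<Sum>y\<in>Y. smult (poly f y) (lagrange_basis Y y))"
  have "degree (smult (poly f y) (lagrange_basis Y y)) \<le> N" if "y \<in> Y" for y
    using degree_lagrange_basis[OF Y(1) that] Y(2) by (meson degree_smult_le le_diff_conv order_trans)
  then have "degree g \<le> N"
    unfolding g_def by (intro degree_diff_le[OF f] degree_sum_le[OF Y(1)])
  moreover have "poly g y = 0" if "y \<in> Y" for y
  proof -
    have "poly (\<Sum>y'\<in>Y. smult (poly f y') (lagrange_basis Y y')) y
          = (\<Sum>y'\<in>Y. if y' = y then poly f y' else 0)"
      unfolding poly_sum by (rule sum.cong) (auto simp: poly_lagrange_basis[OF Y(1) _ that])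
    then show ?thesis
      using that Y(1) by (simp add: g_def)
  qed
  ultimately have "riesz s g = 0"
    using vanish by blast
  then show ?thesis
    by (simp add: g_def riesz_diff riesz_sum riesz_smult mult.commute)
qed

section \<open>Gauss nodes\<close>

lemma poly_sign_constant_if_no_roots:
  fixes F :: "real poly"
  assumes "\<forall>z. a < z \<and> z < b \<longrightarrow> poly F z \<noteq> 0"
  shows "(\<forall>x\<in>{a..b}. 0 \<le> poly F x) \<or> (\<forall>x\<in>{a..b}. poly F x \<le> 0)"
proof (rule ccontr)
  assume "\<not> ?thesis"
  then obtain x1 x2 where x: "x1 \<in> {a..b}" "x2 \<in> {a..b}" "poly F x1 < 0" "0 < poly F x2"
    by (auto simp: not_le)
  then have "x1 \<noteq> x2"
    by auto
  then obtain z where z: "min x1 x2 < z" "z < max x1 x2" "poly F z = 0"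
    using poly_IVT_pos[of x1 x2 F] poly_IVT_neg[of x2 x1 F] x
    by (cases "x1 < x2") auto
  moreover from x z have "a < z" "z < b"
    by (auto simp: min_def max_def split: if_splits)
  ultimately show False
    using assms by blast
qed

lemma poly_sign_constant_if_even_orders:
  fixes F :: "real poly"
  assumes "F \<noteq> 0" "\<forall>z. a < z \<and> z < b \<longrightarrow> even (order z F)"
  shows "(\<forall>x\<in>{a..b}. 0 \<le> poly F x) \<or> (\<forall>x\<in>{a..b}. poly F x \<le> 0)"
  using assms
proof (induction "degree F" arbitrary: F rule: less_induct)
  case less
  show ?case
  proof (cases "\<exists>z. a < z \<and> z < b \<and> poly F z = 0")
    case True
    then obtain z where z: "a < z" "z < b" "poly F z = 0" by blast
    then have "order z F \<noteq> 0"
      using less.prems(1) order_root by blast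
    moreover have "even (order z F)"
      using less.prems(2) z by blast
    ultimately have "2 \<le> order z F"
      by presburger
    then have "[:-z, 1:]^2 dvd F"
      using order_divides by blast
    then obtain G where G: "F = [:-z, 1:]^2 * G" by (metis dvdE)
    have "G \<noteq> 0" using G less.prems by auto
    then have deg: "degree G < degree F"
      using G by (simp add: degree_mult_eq degree_power_eq)
    have "\<forall>w. a < w \<and> w < b \<longrightarrow> even (order w G)"
    proof (intro allI impI)
      fix w assume w: "a < w \<and> w < b"
      have "order w F = order w ([:-z, 1:]^2) + order w G"
        using G less.prems(1) order_mult by metis
      moreover have "order w ([:-z, 1:]^2) = (if w = z then 2 else 0)"
        using order_power_n_n[of z 2] by (auto intro!: order_0I)
      ultimately show "even (order w G)" using less.prems(2) w by (auto split: if_splits)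
    qed
    then have "(\<forall>x\<in>{a..b}. 0 \<le> poly G x) \<or> (\<forall>x\<in>{a..b}. poly G x \<le> 0)"
      by (rule less.hyps[OF deg \<open>G \<noteq> 0\<close>])
    then show ?thesis
      by (auto simp: G intro: mult_nonneg_nonneg mult_nonneg_nonpos)
  next
    case False
    then show ?thesis
      by (intro poly_sign_constant_if_no_roots) blast
  qed
qed

text \<open>A root \<open>z\<close> near which \<open>P\<close> is nonnegative is a double root: otherwise the cofactor of
  \<open>x - z\<close> would have to be both \<open>\<le> 0\<close> and \<open>\<ge> 0\<close> at \<open>z\<close>, by continuity from the two sides.\<close>
lemma square_dvd_if_nonneg_near_root:
  fixes P :: "real poly"
  assumes "poly P z = 0" "0 < e" "\<And>x. \<bar>x - z\<bar> < e \<Longrightarrow> 0 \<le> poly P x"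
  shows "[:-z, 1:]^2 dvd P"
proof -
  obtain Q where Q: "P = [:-z, 1:] * Q"
    using assms(1) by (metis dvdE poly_eq_0_iff_dvd)
  have PQ: "poly P x = (x - z) * poly Q x" for x
    by (simp add: Q algebra_simps)
  have lim: "(poly Q \<longlongrightarrow> poly Q z) (at z within S)" for S
    by (intro tendsto_intros)
  have "poly Q z \<le> 0"
  proof (rule tendsto_upperbound[OF lim])
    have "\<forall>\<^sub>F x in at_left z. x \<in> {z - e<..<z}"
      using assms(2) by (intro eventually_at_left_real) simp
    then show "\<forall>\<^sub>F x in at_left z. poly Q x \<le> 0"
    proof eventually_elim
      case (elim x)
      then have "0 \<le> (x - z) * poly Q x" using assms(3)[of x] PQ[of x] by auto
      with elim show ?case by (simp add: zero_le_mult_iff)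
    qed
  qed simp
  moreover have "0 \<le> poly Q z"
  proof (rule tendsto_lowerbound[OF lim])
    have "\<forall>\<^sub>F x in at_right z. x \<in> {z<..<z + e}"
      using assms(2) by (intro eventually_at_right_real) simp
    then show "\<forall>\<^sub>F x in at_right z. 0 \<le> poly Q x"
    proof eventually_elim
      case (elim x)
      then have "0 \<le> (x - z) * poly Q x" using assms(3)[of x] PQ[of x] by auto
      with elim show ?case by (simp add: zero_le_mult_iff)
    qed
  qed simp
  ultimately obtain R where "Q = [:-z, 1:] * R"
    by (metis dvdE order.antisym poly_eq_0_iff_dvd)
  then show ?thesis
    using Q by (metis dvd_triv_left mult.assoc power2_eq_square)
qed

lemma card_interior_roots_le_half_degree:
  fixes P :: "real poly"
  assumes P: "P \<noteq> 0" "\<forall>x\<in>{a..b}. 0 \<le> poly P x"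
    and S: "S \<subseteq> {a<..<b}" "\<forall>z\<in>S. poly P z = 0"
  shows "finite S \<and> 2 * card S \<le> degree P"
proof -
  have "S \<subseteq> {x. poly P x = 0}"
    using S by auto
  then have fin: "finite S"
    using poly_roots_finite[OF P(1)] by (rule finite_subset)
  have "[:-z, 1:]^2 dvd P" if z: "z \<in> S" for z
  proof (rule square_dvd_if_nonneg_near_root)
    show "poly P z = 0" "0 < min (z - a) (b - z)"
      using S z by auto
  next
    fix x assume "\<bar>x - z\<bar> < min (z - a) (b - z)"
    then have "x \<in> {a..b}" by auto
    then show "0 \<le> poly P x" using P by blast
  qed
  then have "(node_poly S)^2 dvd P"
    by (simp add: node_poly_square_dvd[OF fin])
  then have "degree ((node_poly S)^2) \<le> degree P"
    using P(1) by (rule dvd_imp_degree_le)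
  then show ?thesis
    using fin by (simp add: degree_power_eq degree_node_poly)
qed

lemma riesz_mult_eq_0_if_orthogonal_to_monic_family:
  fixes p :: "nat \<Rightarrow> real poly"
  assumes "\<forall>i\<le>j. degree (p i) = i \<and> lead_coeff (p i) = 1"
    and "\<forall>i\<le>j. riesz t (g * p i) = 0"
    and "degree q \<le> j"
  shows "riesz t (g * q) = 0"
  using assms
proof (induction j arbitrary: q)
  case 0
  have "p 0 = 1" "q = [:coeff q 0:]"
    using 0 by (metis degree_0_id le_refl pCons_one, metis degree_0_id le_zero_eq)
  then have "g * q = smult (coeff q 0) (g * p 0)"
    by (metis mult.right_neutral mult_smult_right smult_pCons smult_0_right mult.commute pCons_one)
  then show ?case using 0 by (simp add: riesz_smult)
next
  case (Suc j)
  define r where "r = q - smult (coeff q (Suc j)) (p (Suc j))"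
  have "degree r \<le> Suc j"
    unfolding r_def using Suc.prems by (intro degree_diff_le) (auto intro: order_trans[OF degree_smult_le])
  moreover have "degree (p (Suc j)) = Suc j" "lead_coeff (p (Suc j)) = 1"
    using Suc.prems(1) by blast+
  then have "coeff r (Suc j) = 0"
    by (simp add: r_def)
  ultimately have "degree r \<le> j"
    by (intro degree_le allI impI) (metis Suc_lessI coeff_eq_0 le_less_trans)
  moreover have "\<forall>i\<le>j. degree (p i) = i \<and> lead_coeff (p i) = 1" "\<forall>i\<le>j. riesz t (g * p i) = 0"
    using Suc.prems(1,2) le_SucI by blast+
  ultimately have "riesz t (g * r) = 0"
    using Suc.IH by blast
  moreover have "g * q = g * r + smult (coeff q (Suc j)) (g * p (Suc j))"
    by (simp add: r_def algebra_simps)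
  ultimately show ?case
    using Suc.prems(2) by (simp add: riesz_add riesz_smult)
qed

text \<open>Subtract from the monomial of degree \<open>j + 1\<close> its projections onto the \<open>p i\<close>, which are pairwise
  orthogonal and of positive norm for the bilinear form \<open>(p, q) \<mapsto> riesz t (p * q)\<close>.\<close>
lemma gram_schmidt_step:
  fixes t :: "nat \<Rightarrow> real" and p :: "nat \<Rightarrow> real poly"
  assumes fam: "\<forall>i\<le>j. degree (p i) = i \<and> lead_coeff (p i) = 1"
    and orth: "\<forall>i\<le>j. \<forall>q. degree q < i \<longrightarrow> riesz t (p i * q) = 0"
    and norm_pos: "\<And>i. i \<le> j \<Longrightarrow> 0 < riesz t (p i * p i)"
  shows "\<exists>P. degree P = Suc j \<and> lead_coeff P = 1 \<and> (\<forall>q. degree q < Suc j \<longrightarrow> riesz t (P * q) = 0)"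
proof -
  have deg_p: "degree (p i) = i" if "i \<le> j" for i
    using fam that by blast
  have orth_p: "riesz t (p i * q) = 0" if "i \<le> j" "degree q < i" for i q
    using orth that by blast
  have pairwise: "riesz t (p i * p l) = 0" if "i \<le> j" "l \<le> j" "i \<noteq> l" for i l
  proof (cases "l < i")
    case True
    then show ?thesis using that by (intro orth_p) (simp_all add: deg_p)
  next
    case False
    then have "riesz t (p l * p i) = 0" using that by (intro orth_p) (simp_all add: deg_p)
    then show ?thesis by (simp add: mult.commute)
  qed
  define c where "c i = riesz t (monom 1 (Suc j) * p i) / riesz t (p i * p i)" for i
  define S where "S = (\<Sum>i\<le>j. smult (c i) (p i))"
  define P where "P = monom 1 (Suc j) - S"
  have "degree S \<le> j"
    unfolding S_def by (rule degree_sum_le) (auto simp: deg_p intro: order_trans[OF degree_smult_le])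
  then have deg_P: "degree P = Suc j"
    unfolding P_def diff_conv_add_uminus
    by (subst degree_add_eq_left) (auto simp: degree_monom_eq)
  moreover have "lead_coeff P = 1"
    using deg_P \<open>degree S \<le> j\<close> by (simp add: P_def coeff_eq_0)
  moreover have "\<forall>l\<le>j. riesz t (P * p l) = 0"
  proof (intro allI impI)
    fix l assume l: "l \<le> j"
    have "riesz t (P * p l) = riesz t (monom 1 (Suc j) * p l) - (\<Sum>i\<le>j. c i * riesz t (p i * p l))"
      by (simp add: P_def S_def left_diff_distrib sum_distrib_right riesz_diff riesz_sum riesz_smult)
    also have "(\<Sum>i\<le>j. c i * riesz t (p i * p l)) = (\<Sum>i\<le>j. if i = l then c l * riesz t (p l * p l) else 0)"
      by (rule sum.cong) (use l pairwise in auto)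
    also have "\<dots> = riesz t (monom 1 (Suc j) * p l)"
      using l norm_pos[OF l] by (simp add: c_def)
    finally show "riesz t (P * p l) = 0" by simp
  qed
  then have "\<forall>q. degree q < Suc j \<longrightarrow> riesz t (P * q) = 0"
    using riesz_mult_eq_0_if_orthogonal_to_monic_family[OF fam] by simp
  ultimately show ?thesis
    by blast
qed

lemma monic_orthogonal_family_exists:
  fixes t :: "nat \<Rightarrow> real"
  assumes pos: "\<And>P. degree P < 2 * k \<Longrightarrow> P \<noteq> 0 \<Longrightarrow> \<forall>x\<in>{a..b}. 0 \<le> poly P x \<Longrightarrow> 0 < riesz t P"
    and "j \<le> k"
  shows "\<exists>p. (\<forall>i\<le>j. degree (p i) = i \<and> lead_coeff (p i) = 1) \<and>
             (\<forall>i\<le>j. \<forall>q. degree q < i \<longrightarrow> riesz t (p i * q) = 0)"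
  using \<open>j \<le> k\<close>
proof (induction j)
  case 0
  show ?case by (rule exI[of _ "\<lambda>_. 1"]) auto
next
  case (Suc j)
  then obtain p where fam: "\<forall>i\<le>j. degree (p i) = i \<and> lead_coeff (p i) = 1"
    and orth: "\<forall>i\<le>j. \<forall>q. degree q < i \<longrightarrow> riesz t (p i * q) = 0"
    by auto
  have "0 < riesz t (p i * p i)" if "i \<le> j" for i
  proof (rule pos)
    have "degree (p i) = i" "p i \<noteq> 0"
      using fam that by auto
    then show "degree (p i * p i) < 2 * k" "p i * p i \<noteq> 0"
      using that Suc.prems by (simp_all add: degree_mult_eq)
  qed simp
  then obtain P where P: "degree P = Suc j" "lead_coeff P = 1" "\<forall>q. degree q < Suc j \<longrightarrow> riesz t (P * q) = 0"
    using gram_schmidt_step[OF fam orth] by blast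
  let ?p = "p(Suc j := P)"
  have "degree (?p i) = i \<and> lead_coeff (?p i) = 1" "\<forall>q. degree q < i \<longrightarrow> riesz t (?p i * q) = 0"
    if "i \<le> Suc j" for i
    using that P fam orth by (cases "i = Suc j"; simp add: le_Suc_eq)+
  then show ?case
    by (intro exI[of _ ?p]) blast
qed

lemma riesz_nonzero_if_even_orders:
  fixes t :: "nat \<Rightarrow> real"
  assumes pos: "\<And>P. degree P < 2 * k \<Longrightarrow> P \<noteq> 0 \<Longrightarrow> \<forall>x\<in>{a..b}. 0 \<le> poly P x \<Longrightarrow> 0 < riesz t P"
    and F: "F \<noteq> 0" "degree F < 2 * k" "\<forall>z. a < z \<and> z < b \<longrightarrow> even (order z F)"
  shows "riesz t F \<noteq> 0"
  using poly_sign_constant_if_even_orders[OF F(1,3)]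
proof
  assume "\<forall>x\<in>{a..b}. 0 \<le> poly F x"
  then show ?thesis
    using pos[of F] F by simp
next
  assume "\<forall>x\<in>{a..b}. poly F x \<le> 0"
  then show ?thesis
    using pos[of "- F"] F by (simp add: riesz_minus)
qed

lemma monic_eq_node_poly_if_dvd:
  assumes "node_poly Z dvd P" "finite Z" "degree P = card Z" "lead_coeff P = 1"
  shows "P = node_poly Z"
proof -
  obtain h where h: "P = node_poly Z * h"
    using assms(1) by (elim dvdE)
  with assms(4) have "h \<noteq> 0"
    by auto
  then have "degree P = card Z + degree h"
    using h assms(2) by (metis degree_mult_eq degree_node_poly node_poly_nonzero)
  with assms(3) have "degree h = 0"
    by simp
  moreover from h assms(4) have "lead_coeff h = 1"
    by (simp add: lead_coeff_mult lead_coeff_node_poly)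
  ultimately have "h = 1"
    by (metis degree_0_id pCons_one)
  with h show ?thesis
    by simp
qed

text \<open>The monic orthogonal polynomial of degree \<open>k\<close> has \<open>k\<close> simple roots in \<open>(a, b)\<close>: multiplying it
  by the node polynomial of its roots of odd order would otherwise give a polynomial of degree
  \<open>< 2 k\<close>, of constant sign on \<open>[a, b]\<close>, that is annihilated by the functional.\<close>
lemma orthogonal_poly_eq_node_poly:
  fixes t :: "nat \<Rightarrow> real"
  assumes pos: "\<And>P. degree P < 2 * k \<Longrightarrow> P \<noteq> 0 \<Longrightarrow> \<forall>x\<in>{a..b}. 0 \<le> poly P x \<Longrightarrow> 0 < riesz t P"
    and P: "degree P = k" "lead_coeff P = 1"
    and orth: "\<And>q. degree q < k \<Longrightarrow> riesz t (P * q) = 0"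
  shows "\<exists>Z. Z \<subseteq> {a<..<b} \<and> finite Z \<and> card Z = k \<and> P = node_poly Z"
proof -
  have "P \<noteq> 0" using P by auto
  define Z where "Z = {z. a < z \<and> z < b \<and> odd (order z P)}"
  have roots: "Z \<subseteq> {x. poly P x = 0}"
    unfolding Z_def using order_root \<open>P \<noteq> 0\<close> by fastforce
  then have fin: "finite Z" and "card Z \<le> k"
    using poly_roots_finite[OF \<open>P \<noteq> 0\<close>] card_poly_roots_bound[OF \<open>P \<noteq> 0\<close>] P
    by (auto intro: finite_subset dest: card_mono)
  moreover have "\<not> card Z < k"
  proof
    assume "card Z < k"
    define F where "F = P * node_poly Z"
    have "F \<noteq> 0" "degree F < 2 * k"
      using \<open>card Z < k\<close> P fin \<open>P \<noteq> 0\<close> by (simp_all add: F_def degree_mult_eq degree_node_poly)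
    moreover have "even (order z F)" if "a < z \<and> z < b" for z
      using that order_mult[of P "node_poly Z" z] \<open>F \<noteq> 0\<close>
      by (simp add: F_def order_node_poly[OF fin]) (simp add: Z_def)
    ultimately have "riesz t F \<noteq> 0"
      by (intro riesz_nonzero_if_even_orders[OF pos]) auto
    moreover have "riesz t F = 0"
      unfolding F_def using \<open>card Z < k\<close> fin by (intro orth) (simp add: degree_node_poly)
    ultimately show False
      by contradiction
  qed
  ultimately have card: "card Z = k"
    by simp
  have "node_poly Z dvd P"
    using roots by (intro node_poly_dvd[OF fin]) auto
  with fin card P have "P = node_poly Z"
    by (intro monic_eq_node_poly_if_dvd) simp_all
  moreover have "Z \<subseteq> {a<..<b}"
    unfolding Z_def by auto
  ultimately show ?thesis
    using fin card by blast
qed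

lemma gauss_nodes_exist:
  fixes t :: "nat \<Rightarrow> real"
  assumes pos: "\<And>P. degree P < 2 * k \<Longrightarrow> P \<noteq> 0 \<Longrightarrow> \<forall>x\<in>{a..b}. 0 \<le> poly P x \<Longrightarrow> 0 < riesz t P"
  shows "\<exists>Z. Z \<subseteq> {a<..<b} \<and> finite Z \<and> card Z = k \<and>
           (\<forall>f. degree f < 2 * k \<longrightarrow> (\<forall>z\<in>Z. poly f z = 0) \<longrightarrow> riesz t f = 0)"
proof -
  obtain p where fam: "\<forall>i\<le>k. degree (p i) = i \<and> lead_coeff (p i) = 1"
    and orth: "\<forall>i\<le>k. \<forall>q. degree q < i \<longrightarrow> riesz t (p i * q) = 0"
    using monic_orthogonal_family_exists[OF pos order.refl] by blast
  then have "degree (p k) = k" "lead_coeff (p k) = 1" "\<And>q. degree q < k \<Longrightarrow> riesz t (p k * q) = 0"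
    by blast+
  from orthogonal_poly_eq_node_poly[OF pos this] obtain Z where Z: "Z \<subseteq> {a<..<b}" "finite Z" "card Z = k"
    and "p k = node_poly Z"
    by blast
  with orth have orth: "\<And>q. degree q < k \<Longrightarrow> riesz t (node_poly Z * q) = 0"
    by auto
  have "riesz t f = 0" if f: "degree f < 2 * k" "\<forall>z\<in>Z. poly f z = 0" for f
  proof (cases "f = 0")
    case False
    obtain q where q: "f = node_poly Z * q"
      using node_poly_dvd[OF Z(2) f(2)] by (metis dvdE)
    then have "degree q < k"
      using f False Z by (auto simp: degree_mult_eq degree_node_poly)
    then show ?thesis using orth q by simp
  qed simp
  with Z show ?thesis by blast
qed

section \<open>Quadrature rules with positive weights\<close>

definition quadrature_rule :: "nat \<Rightarrow> (nat \<Rightarrow> real) \<Rightarrow> real set \<Rightarrow> (real \<Rightarrow> real) \<Rightarrow> bool" where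
  "quadrature_rule n s Y w \<longleftrightarrow> finite Y \<and> (\<forall>y\<in>Y. 0 < w y) \<and>
     (\<forall>f. degree f \<le> n \<longrightarrow> riesz s f = (\<Sum>y\<in>Y. w y * poly f y))"

text \<open>A nonnegative test polynomial on \<open>[a, b]\<close> that singles out the node \<open>y\<close> of \<open>Y\<close>; applying a
  strictly positive functional to it shows that the weight at \<open>y\<close> is positive.\<close>
definition nonneg_peak_poly :: "nat \<Rightarrow> real \<Rightarrow> real \<Rightarrow> real set \<Rightarrow> real \<Rightarrow> real poly \<Rightarrow> bool" where
  "nonneg_peak_poly n a b Y y F \<longleftrightarrow> degree F \<le> n \<and> (\<forall>x\<in>{a..b}. 0 \<le> poly F x) \<and>
     (\<forall>x\<in>Y - {y}. poly F x = 0) \<and> 0 < poly F y"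

lemma nonneg_peak_poly_mult_node_poly_square:
  assumes F: "nonneg_peak_poly d a b Y y F"
    and Z: "finite Z" "y \<notin> Z" "d + 2 * card Z \<le> n"
  shows "nonneg_peak_poly n a b (Y \<union> Z) y (F * (node_poly Z)^2)"
proof -
  have "degree (F * (node_poly Z)^2) \<le> d + 2 * card Z"
    using F degree_mult_le[of F "(node_poly Z)^2"] Z(1)
    by (simp add: nonneg_peak_poly_def degree_power_eq degree_node_poly)
  with F Z show ?thesis
    by (auto simp: nonneg_peak_poly_def poly_node_poly_eq_0_iff)
qed

lemma quadrature_rule_if_vanishing:
  assumes Y: "finite Y" "card Y \<le> n + 1"
    and vanish: "\<And>f. degree f \<le> n \<Longrightarrow> \<forall>y\<in>Y. poly f y = 0 \<Longrightarrow> riesz s f = 0"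
    and sp: "strictly_positive_on n s a b"
    and peak: "\<And>y. y \<in> Y \<Longrightarrow> \<exists>F. nonneg_peak_poly n a b Y y F"
  shows "quadrature_rule n s Y (\<lambda>y. riesz s (lagrange_basis Y y))"
proof -
  have interp: "riesz s f = (\<Sum>y\<in>Y. riesz s (lagrange_basis Y y) * poly f y)" if "degree f \<le> n" for f
    using riesz_eq_interpolation_sum[OF Y vanish that] .
  have "0 < riesz s (lagrange_basis Y y)" if y: "y \<in> Y" for y
  proof -
    obtain F where F: "degree F \<le> n" "\<forall>x\<in>{a..b}. 0 \<le> poly F x" "\<forall>x\<in>Y - {y}. poly F x = 0" "0 < poly F y"
      using peak[OF y] unfolding nonneg_peak_poly_def by blast
    have "riesz s F = (\<Sum>y'\<in>Y. if y' = y then riesz s (lagrange_basis Y y) * poly F y else 0)"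
      unfolding interp[OF F(1)] by (rule sum.cong) (use F(3) in auto)
    also have "\<dots> = riesz s (lagrange_basis Y y) * poly F y"
      using y Y(1) by simp
    finally have "riesz s F = riesz s (lagrange_basis Y y) * poly F y" .
    moreover have "F \<noteq> 0"
      using F(4) by auto
    then have "0 < riesz s F"
      using sp F(1,2) by (simp add: strictly_positive_on_iff)
    ultimately show ?thesis
      using F(4) by (simp add: zero_less_mult_iff)
  qed
  with Y(1) interp show ?thesis
    unfolding quadrature_rule_def by simp
qed

lemma nonneg_peak_poly_at_free_node:
  assumes r: "\<forall>x\<in>{a..b}. 0 \<le> poly r x" "degree r = card R" "\<And>x. poly r x = 0 \<longleftrightarrow> x \<in> R"
    and Z: "finite Z" "Z \<subseteq> {a<..<b}" and y: "y \<in> Z" "y \<notin> R"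
    and n: "card R + 2 * card Z \<le> n + 2"
  shows "nonneg_peak_poly n a b (R \<union> Z) y (r * (node_poly (Z - {y}))^2)"
proof -
  have "0 \<le> poly r y"
    using r(1) y(1) Z(2) by auto
  moreover have "poly r y \<noteq> 0"
    using r(3) y(2) by simp
  ultimately have "0 < poly r y"
    by (metis order.not_eq_order_implies_strict)
  then have r_peak: "nonneg_peak_poly (card R) a b (insert y R) y r"
    unfolding nonneg_peak_poly_def using r by auto
  have "0 < card Z"
    using y(1) Z(1) card_gt_0_iff by blast
  then have "card R + 2 * card (Z - {y}) \<le> n"
    using y(1) Z(1) n by (simp add: card_Diff_singleton)
  moreover have "finite (Z - {y})" "y \<notin> Z - {y}"
    using Z(1) by auto
  ultimately have "nonneg_peak_poly n a b (insert y R \<union> (Z - {y})) y (r * (node_poly (Z - {y}))^2)"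
    using nonneg_peak_poly_mult_node_poly_square[OF r_peak] by blast
  moreover have "insert y R \<union> (Z - {y}) = R \<union> Z"
    using y(1) by auto
  ultimately show ?thesis
    by simp
qed

lemma riesz_eq_0_if_vanishes_on_nodes:
  assumes r: "r = smult \<epsilon> (node_poly R)" "\<epsilon> \<noteq> 0" "finite R"
    and vanish_Z: "\<forall>g. degree g < 2 * k \<longrightarrow> (\<forall>z\<in>Z. poly g z = 0) \<longrightarrow> riesz (mult_moments r s) g = 0"
    and RZ: "R \<inter> Z = {}" and n: "n + 1 = card R + 2 * k"
    and f: "degree f \<le> n" "\<forall>y\<in>R \<union> Z. poly f y = 0"
  shows "riesz s f = 0"
proof -
  have "r dvd f"
    using f(2) r by (simp add: smult_dvd_iff node_poly_dvd)
  then obtain g where g: "f = r * g"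
    by (elim dvdE)
  show ?thesis
  proof (cases "g = 0")
    case False
    then have "degree g < 2 * k"
      using f(1) g r n by (simp add: degree_mult_eq degree_node_poly)
    moreover have "\<forall>z\<in>Z. poly g z = 0"
      using f(2) g RZ r by (auto simp: poly_node_poly_eq_0_iff)
    ultimately have "riesz (mult_moments r s) g = 0"
      using vanish_Z by blast
    then show ?thesis
      by (simp add: g riesz_mult_moments)
  qed (simp add: g)
qed

text \<open>The free nodes \<open>Z\<close> are the Gauss nodes of the functional \<open>g \<mapsto> riesz s (r * g)\<close>, where
  \<open>r = smult \<epsilon> (node_poly R)\<close> is nonnegative on \<open>[a, b]\<close>.  The degree count \<open>n + 1 = card R + 2 k\<close>
  is exactly what makes this functional strictly positive below degree \<open>2 k\<close> and the rule exact up
  to degree \<open>n\<close>.\<close>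
lemma quadrature_rule_with_prescribed_nodes:
  fixes R :: "real set" and \<epsilon> :: real
  assumes sp: "strictly_positive_on n s a b"
    and R: "finite R" "R \<inter> {a<..<b} = {}" and n: "n + 1 = card R + 2 * k"
    and sign: "\<epsilon> \<noteq> 0" "\<forall>x\<in>{a..b}. 0 \<le> \<epsilon> * poly (node_poly R) x"
    and peak_R: "\<And>y. y \<in> R \<Longrightarrow> \<exists>q. nonneg_peak_poly (card R - 1) a b R y q"
  shows "\<exists>Z w. Z \<subseteq> {a<..<b} \<and> card Z = k \<and> quadrature_rule n s (R \<union> Z) w"
proof -
  define r where "r = smult \<epsilon> (node_poly R)"
  have r: "r \<noteq> 0" "degree r = card R" "\<forall>x\<in>{a..b}. 0 \<le> poly r x"
    using R(1) sign by (simp_all add: r_def degree_node_poly)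
  have r_root: "poly r x = 0 \<longleftrightarrow> x \<in> R" for x
    using R(1) sign(1) by (simp add: r_def poly_node_poly_eq_0_iff)
  have "0 < riesz (mult_moments r s) P"
    if "degree P < 2 * k" "P \<noteq> 0" "\<forall>x\<in>{a..b}. 0 \<le> poly P x" for P
    using riesz_mult_moments_pos[OF sp r(3,1)] that r(2) n by simp
  then obtain Z where Z: "Z \<subseteq> {a<..<b}" "finite Z" "card Z = k"
    and vanish_Z: "\<forall>g. degree g < 2 * k \<longrightarrow> (\<forall>z\<in>Z. poly g z = 0) \<longrightarrow> riesz (mult_moments r s) g = 0"
    using gauss_nodes_exist[of k a b "mult_moments r s"] by blast
  have RZ: "R \<inter> Z = {}"
    using R(2) Z(1) by blast
  have vanish: "riesz s f = 0" if "degree f \<le> n" "\<forall>y\<in>R \<union> Z. poly f y = 0" for f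
    using riesz_eq_0_if_vanishes_on_nodes[OF r_def sign(1) R(1) vanish_Z RZ n that] .
  have peak: "\<exists>F. nonneg_peak_poly n a b (R \<union> Z) y F" if y: "y \<in> R \<union> Z" for y
  proof (cases "y \<in> R")
    case True
    then obtain q where q: "nonneg_peak_poly (card R - 1) a b R y q"
      using peak_R by blast
    have "0 < card R"
      using True R(1) card_gt_0_iff by blast
    then have "y \<notin> Z" "card R - 1 + 2 * card Z \<le> n"
      using True RZ Z(3) n by auto
    then show ?thesis
      using nonneg_peak_poly_mult_node_poly_square[OF q Z(2)] by blast
  next
    case False
    with y have "y \<in> Z"
      by simp
    moreover have "card R + 2 * card Z \<le> n + 2"
      using Z(3) n by simp
    ultimately show ?thesis
      using nonneg_peak_poly_at_free_node[OF r(3,2) r_root Z(2,1)] False by blast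
  qed
  have "finite (R \<union> Z)"
    using R(1) Z(2) by simp
  moreover have "card (R \<union> Z) \<le> n + 1"
    using R(1) Z(2,3) RZ n by (simp add: card_Un_disjoint)
  ultimately have "quadrature_rule n s (R \<union> Z) (\<lambda>y. riesz s (lagrange_basis (R \<union> Z) y))"
    by (rule quadrature_rule_if_vanishing[OF _ _ vanish sp peak])
  with Z(1,3) show ?thesis
    by blast
qed

lemma gauss_quadrature_rule:
  assumes sp: "strictly_positive_on n s a b" and n: "n + 1 = 2 * m"
  shows "\<exists>Z w. Z \<subseteq> {a<..<b} \<and> card Z = m \<and> quadrature_rule n s Z w"
proof -
  have "\<forall>x\<in>{a..b}. 0 \<le> 1 * poly (node_poly {}) x"
    by (simp add: poly_node_poly)
  from quadrature_rule_with_prescribed_nodes[OF sp _ _ _ _ this] n show ?thesis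
    by simp
qed

lemma gauss_radau_quadrature_rule:
  assumes sp: "strictly_positive_on n s a b" and n: "n = 2 * m" and c: "c = a \<or> c = b"
  shows "\<exists>Z w. Z \<subseteq> {a<..<b} \<and> card Z = m \<and> quadrature_rule n s (insert c Z) w"
proof -
  define \<epsilon> :: real where "\<epsilon> = (if c = a then 1 else -1)"
  have "\<epsilon> \<noteq> 0" "\<forall>x\<in>{a..b}. 0 \<le> \<epsilon> * poly (node_poly {c}) x"
    using c by (auto simp: \<epsilon>_def poly_node_poly)
  moreover have "\<exists>q. nonneg_peak_poly (card {c} - 1) a b {c} y q" if "y \<in> {c}" for y
    using that by (intro exI[of _ 1]) (simp add: nonneg_peak_poly_def)
  moreover have "{c} \<inter> {a<..<b} = {}" "n + 1 = card {c} + 2 * m"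
    using c n by auto
  ultimately show ?thesis
    using quadrature_rule_with_prescribed_nodes[OF sp, of "{c}" m \<epsilon>] by simp
qed

lemma gauss_lobatto_quadrature_rule:
  assumes sp: "strictly_positive_on n s a b" and n: "n + 1 = 2 * m" and "a < b"
  shows "\<exists>Z w. Z \<subseteq> {a<..<b} \<and> quadrature_rule n s ({a, b} \<union> Z) w"
proof -
  have "\<forall>x\<in>{a..b}. 0 \<le> -1 * poly (node_poly {a, b}) x"
    using \<open>a < b\<close> by (simp add: poly_node_poly mult_nonneg_nonpos)
  moreover have "\<exists>q. nonneg_peak_poly (card {a, b} - 1) a b {a, b} y q" if "y \<in> {a, b}" for y
  proof (cases "y = a")
    case True
    then show ?thesis
      using \<open>a < b\<close> by (intro exI[of _ "[:b, -1:]"]) (auto simp: nonneg_peak_poly_def)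
  next
    case False
    with that show ?thesis
      using \<open>a < b\<close> by (intro exI[of _ "[:-a, 1:]"]) (auto simp: nonneg_peak_poly_def)
  qed
  moreover have "{a, b} \<inter> {a<..<b} = {}" "n + 1 = card {a, b} + 2 * (m - 1)"
    using n \<open>a < b\<close> by auto
  ultimately show ?thesis
    using quadrature_rule_with_prescribed_nodes[OF sp, of "{a, b}" "m - 1" "-1"] by auto
qed

lemma two_quadrature_rules:
  assumes sp: "strictly_positive_on n s a b" and "a < b"
  obtains Y1 w1 Y2 w2 where "quadrature_rule n s Y1 w1" "quadrature_rule n s Y2 w2"
    "Y1 \<subseteq> {a..b}" "Y2 \<subseteq> {a..b}" "card Y1 = n div 2 + 1" "b \<in> Y2" "b \<notin> Y1"
proof (cases "even n")
  case True
  then obtain m where n: "n = 2 * m"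
    by (elim evenE)
  obtain Z1 w1 where Z1: "Z1 \<subseteq> {a<..<b}" "card Z1 = m" "quadrature_rule n s (insert a Z1) w1"
    using gauss_radau_quadrature_rule[OF sp n] by blast
  obtain Z2 w2 where Z2: "Z2 \<subseteq> {a<..<b}" "quadrature_rule n s (insert b Z2) w2"
    using gauss_radau_quadrature_rule[OF sp n] by blast
  have "finite Z1"
    using Z1(3) by (simp add: quadrature_rule_def)
  with Z1 n have "card (insert a Z1) = n div 2 + 1"
    by (auto simp: card_insert_if)
  with Z1 Z2 \<open>a < b\<close> show ?thesis
    by (intro that[OF Z1(3) Z2(2)]) auto
next
  case False
  then have n: "n + 1 = 2 * (n div 2 + 1)"
    by presburger
  obtain Z1 w1 where Z1: "Z1 \<subseteq> {a<..<b}" "card Z1 = n div 2 + 1" "quadrature_rule n s Z1 w1"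
    using gauss_quadrature_rule[OF sp n] by blast
  obtain Z2 w2 where Z2: "Z2 \<subseteq> {a<..<b}" "quadrature_rule n s ({a, b} \<union> Z2) w2"
    using gauss_lobatto_quadrature_rule[OF sp n \<open>a < b\<close>] by blast
  from Z1 Z2 \<open>a < b\<close> show ?thesis
    by (intro that[OF Z1(3) Z2(2)]) auto
qed

section \<open>Representing measures\<close>

lemma msupp_compl_null_set:
  fixes \<mu> :: "real measure"
  assumes S: "sets \<mu> = sets borel"
  shows "- msupp \<mu> \<in> null_sets \<mu>"
proof -
  define F where "F = {ball x e | x e. 0 < e \<and> emeasure \<mu> (ball x e) = 0}"
  have "\<Union>F \<subseteq> - msupp \<mu>"
  proof
    fix y assume "y \<in> \<Union>F"
    then obtain x e where xe: "0 < e" "emeasure \<mu> (ball x e) = 0" "y \<in> ball x e"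
      by (auto simp: F_def)
    then have "ball y (e - dist x y) \<subseteq> ball x e"
      by (simp add: ball_subset_ball_iff dist_commute)
    then have "emeasure \<mu> (ball y (e - dist x y)) \<le> emeasure \<mu> (ball x e)"
      by (intro emeasure_mono) (auto simp: S)
    with xe(2) have "emeasure \<mu> (ball y (e - dist x y)) = 0"
      by simp
    then show "y \<in> - msupp \<mu>"
      using xe(3) unfolding msupp_def by (auto intro!: exI[of _ "e - dist x y"])
  qed
  moreover have "- msupp \<mu> \<subseteq> \<Union>F"
    by (force simp: F_def msupp_def)
  ultimately have UF: "\<Union>F = - msupp \<mu>" ..
  obtain F' where F': "F' \<subseteq> F" "countable F'" "\<Union>F' = \<Union>F"
    using Lindelof[of F] by (auto simp: F_def)
  have "(\<Union>i\<in>F'. i) \<in> null_sets \<mu>"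
    using F'(1,2) by (intro null_sets_UN') (auto simp: F_def S null_sets_def)
  then show ?thesis
    using F'(3) UF by simp
qed

lemma AE_in_msupp:
  fixes \<mu> :: "real measure"
  assumes "sets \<mu> = sets borel"
  shows "AE x in \<mu>. x \<in> msupp \<mu>"
  by (rule AE_I'[OF msupp_compl_null_set[OF assms]]) auto

lemma reps_pos_sets: "\<mu> \<in> reps_pos n s \<Longrightarrow> sets \<mu> = sets borel"
  by (simp add: reps_pos_def)

lemma reps_pos_space: "\<mu> \<in> reps_pos n s \<Longrightarrow> space \<mu> = UNIV"
  by (metis reps_pos_sets sets_eq_imp_space_eq space_borel)

lemma reps_pos_finite_measure:
  assumes "\<mu> \<in> reps_pos n s"
  shows "finite_measure \<mu>"
proof -
  have "integrable \<mu> (\<lambda>t::real. t ^ 0)"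
    using assms unfolding reps_pos_def by blast
  then have "integrable \<mu> (indicator (space \<mu>) :: real \<Rightarrow> real)"
    by (simp add: reps_pos_space[OF assms])
  then show ?thesis
    by (intro finite_measureI) (simp add: integrable_indicator_iff)
qed

lemma reps_pos_integral_poly:
  assumes "\<mu> \<in> reps_pos n s" "degree P \<le> n"
  shows "integrable \<mu> (poly P)" "riesz s P = (\<integral>x. poly P x \<partial>\<mu>)"
proof -
  have mom: "integrable \<mu> (\<lambda>t. t ^ k)" "(\<integral>t. t ^ k \<partial>\<mu>) = s k" if "k \<le> degree P" for k
    using assms that unfolding reps_pos_def by auto
  have poly_eq: "poly P = (\<lambda>x. \<Sum>k\<le>degree P. coeff P k * x ^ k)"
    by (rule ext) (simp add: poly_altdef)
  show "integrable \<mu> (poly P)"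
    unfolding poly_eq using mom by (intro Bochner_Integration.integrable_sum integrable_mult_right) auto
  have "(\<integral>x. poly P x \<partial>\<mu>) = (\<Sum>k\<le>degree P. coeff P k * (\<integral>x. x ^ k \<partial>\<mu>))"
    unfolding poly_eq using mom by (subst Bochner_Integration.integral_sum) auto
  then show "riesz s P = (\<integral>x. poly P x \<partial>\<mu>)"
    using mom by (simp add: riesz_def)
qed

lemma integral_pos_if_pos_on_msupp:
  fixes \<mu> :: "real measure" and f :: "real \<Rightarrow> real"
  assumes S: "sets \<mu> = sets borel" and fin: "finite_measure \<mu>"
    and f: "integrable \<mu> f" "continuous_on UNIV f" "\<forall>x\<in>msupp \<mu>. 0 \<le> f x"
    and x: "x \<in> msupp \<mu>" "0 < f x"
  shows "0 < (\<integral>y. f y \<partial>\<mu>)"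
proof -
  have "isCont f x"
    using f(2) by (simp add: continuous_on_eq_continuous_at)
  then have "\<forall>\<^sub>F y in at x. f x / 2 < f y"
    using x(2) by (intro order_tendstoD) (auto simp: isCont_def)
  then obtain d where "0 < d" "\<And>y. y \<noteq> x \<Longrightarrow> dist y x < d \<Longrightarrow> f x / 2 < f y"
    by (auto simp: eventually_at)
  then have d: "0 < d" "\<And>y. dist y x < d \<Longrightarrow> f x / 2 < f y"
    using x(2) by (metis field_sum_of_halves half_gt_zero_iff less_add_same_cancel2)+
  have B: "ball x d \<in> sets \<mu>"
    by (simp add: S)
  have B_finite: "emeasure \<mu> (ball x d) < top"
    using finite_measure.emeasure_finite[OF fin] by (simp add: top.not_eq_extremum)
  have "0 < emeasure \<mu> (ball x d)"
    using x(1) d(1) by (auto simp: msupp_def)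
  then have "0 < measure \<mu> (ball x d)"
    by (simp add: finite_measure.emeasure_eq_measure[OF fin])
  then have "0 < (\<integral>y. (f x / 2) * indicator (ball x d) y \<partial>\<mu>)"
    using B B_finite x(2) by simp
  also have "\<dots> \<le> (\<integral>y. f y \<partial>\<mu>)"
  proof (rule integral_mono_AE)
    show "integrable \<mu> (\<lambda>y. (f x / 2) * indicator (ball x d) y)"
      using B B_finite by (intro integrable_mult_right) (simp add: integrable_indicator_iff)
    show "AE y in \<mu>. f x / 2 * indicator (ball x d) y \<le> f y"
      using AE_in_msupp[OF S]
    proof eventually_elim
      case (elim y)
      then show ?case
        using f(3) d(2)[of y] by (auto simp: dist_commute split: split_indicator)
    qed
  qed (rule f(1))
  finally show ?thesis .
qed

lemma positive_on_if_reps_pos: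
  assumes \<mu>: "\<mu> \<in> reps_pos n s" and supp: "msupp \<mu> \<subseteq> {a..b}"
  shows "positive_on n s a b"
  unfolding positive_on_def
proof (intro allI impI)
  fix P :: "real poly" assume P: "degree P \<le> n \<and> (\<forall>x\<in>{a..b}. 0 \<le> poly P x)"
  have "0 \<le> (\<integral>x. poly P x \<partial>\<mu>)"
    using AE_in_msupp[OF reps_pos_sets[OF \<mu>]]
    by (rule integral_nonneg_AE[OF eventually_mono]) (use supp P in auto)
  then show "0 \<le> riesz s P"
    using reps_pos_integral_poly(2)[OF \<mu>] P by simp
qed

lemma poly_eq_0_on_msupp_if_riesz_eq_0:
  assumes \<mu>: "\<mu> \<in> reps_pos n s" and supp: "msupp \<mu> \<subseteq> {a..b}"
    and P: "degree P \<le> n" "\<forall>x\<in>{a..b}. 0 \<le> poly P x" "riesz s P = 0"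
  shows "\<forall>x\<in>msupp \<mu>. poly P x = 0"
proof (rule ccontr)
  assume "\<not> ?thesis"
  then obtain x where x: "x \<in> msupp \<mu>" "poly P x \<noteq> 0"
    by blast
  with supp P(2) have "0 < poly P x"
    by force
  moreover have "continuous_on UNIV (poly P)"
    by (rule continuous_on_poly[OF continuous_on_id])
  ultimately have "0 < (\<integral>y. poly P y \<partial>\<mu>)"
    using x(1) supp P(2) reps_pos_integral_poly(1)[OF \<mu> P(1)]
    by (intro integral_pos_if_pos_on_msupp[OF reps_pos_sets[OF \<mu>] reps_pos_finite_measure[OF \<mu>]]) auto
  then show False
    using reps_pos_integral_poly(2)[OF \<mu> P(1)] P(3) by simp
qed

definition quadrature_measure :: "real set \<Rightarrow> (real \<Rightarrow> real) \<Rightarrow> real measure" where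
  "quadrature_measure Y w = distr (point_measure Y (\<lambda>y. ennreal (w y))) borel (\<lambda>x. x)"

lemma sets_quadrature_measure [simp]: "sets (quadrature_measure Y w) = sets borel"
  by (simp add: quadrature_measure_def)

lemma emeasure_quadrature_measure:
  assumes "finite Y" "A \<in> sets borel"
  shows "emeasure (quadrature_measure Y w) A = (\<Sum>y\<in>A \<inter> Y. ennreal (w y))"
proof -
  have "emeasure (quadrature_measure Y w) A = emeasure (point_measure Y (\<lambda>y. ennreal (w y))) (A \<inter> Y)"
    unfolding quadrature_measure_def using assms(2)
    by (subst emeasure_distr) (auto simp: space_point_measure)
  also have "\<dots> = (\<Sum>y\<in>A \<inter> Y. ennreal (w y))"
    using assms(1) by (intro emeasure_point_measure_finite) auto
  finally show ?thesis .
qed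

lemma msupp_quadrature_measure:
  assumes Y: "finite Y" and w: "\<forall>y\<in>Y. 0 < w y"
  shows "msupp (quadrature_measure Y w) = Y"
proof
  show "Y \<subseteq> msupp (quadrature_measure Y w)"
  proof
    fix y assume y: "y \<in> Y"
    have "0 < emeasure (quadrature_measure Y w) (ball y e)" if "0 < e" for e
    proof -
      have "0 < ennreal (w y)"
        using w y by simp
      also have "\<dots> \<le> (\<Sum>z\<in>ball y e \<inter> Y. ennreal (w z))"
        using y that Y by (intro member_le_sum) auto
      finally show ?thesis
        by (simp add: emeasure_quadrature_measure[OF Y])
    qed
    then show "y \<in> msupp (quadrature_measure Y w)"
      by (simp add: msupp_def)
  qed
next
  show "msupp (quadrature_measure Y w) \<subseteq> Y"
  proof
    fix x assume x: "x \<in> msupp (quadrature_measure Y w)"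
    show "x \<in> Y"
    proof (rule ccontr)
      assume "x \<notin> Y"
      moreover obtain d where "0 < d" "\<forall>y\<in>Y. y \<noteq> x \<longrightarrow> d \<le> dist x y"
        using finite_set_avoid[OF Y] by blast
      ultimately have "ball x d \<inter> Y = {}"
        by (auto simp: dist_commute)
      then have "emeasure (quadrature_measure Y w) (ball x d) = 0"
        by (simp add: emeasure_quadrature_measure[OF Y])
      with x \<open>0 < d\<close> show False
        by (auto simp: msupp_def)
    qed
  qed
qed

lemma quadrature_measure_moment:
  assumes "finite Y"
  shows "integrable (quadrature_measure Y w) (\<lambda>t. t ^ k)"
    "\<forall>y\<in>Y. 0 \<le> w y \<Longrightarrow> (\<integral>t. t ^ k \<partial>quadrature_measure Y w) = (\<Sum>y\<in>Y. w y * y ^ k)"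
proof -
  have m: "(\<lambda>t::real. t ^ k) \<in> borel_measurable borel"
    by measurable
  have "integrable (point_measure Y (\<lambda>y. ennreal (w y))) (\<lambda>t. t ^ k)"
    using integrable_point_measure_finite[OF assms] by blast
  then show "integrable (quadrature_measure Y w) (\<lambda>t. t ^ k)"
    unfolding quadrature_measure_def by (subst integrable_distr_eq) (use m in simp_all)
  show "(\<integral>t. t ^ k \<partial>quadrature_measure Y w) = (\<Sum>y\<in>Y. w y * y ^ k)" if "\<forall>y\<in>Y. 0 \<le> w y"
    unfolding quadrature_measure_def
    by (subst integral_distr[OF _ m]) (use assms that in \<open>simp_all add: lebesgue_integral_point_measure_finite\<close>)
qed

lemma quadrature_measure_in_reps_pos:
  assumes q: "quadrature_rule n s Y w" and Y: "Y \<subseteq> {c..d}" "0 < c" "c \<le> d"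
  shows "quadrature_measure Y w \<in> reps_pos n s"
proof -
  have fin: "finite Y" and w: "\<forall>y\<in>Y. 0 < w y"
    and exact: "\<And>f. degree f \<le> n \<Longrightarrow> riesz s f = (\<Sum>y\<in>Y. w y * poly f y)"
    using q by (auto simp: quadrature_rule_def)
  have "(\<integral>t. t ^ k \<partial>quadrature_measure Y w) = s k" if "k \<le> n" for k
    using quadrature_measure_moment(2)[OF fin, of w k] w exact[of "monom 1 k"] that
    by (simp add: riesz_monom degree_monom_eq poly_monom less_imp_le)
  then show ?thesis
    unfolding reps_pos_def
    using msupp_quadrature_measure[OF fin w] quadrature_measure_moment(1)[OF fin] Y by auto
qed

lemma emeasure_reps_pos_finite_support:
  assumes \<mu>: "\<mu> \<in> reps_pos n s"
    and S: "finite S" "card S \<le> n + 1" "msupp \<mu> \<subseteq> S" and A: "A \<in> sets borel"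
  shows "emeasure \<mu> A = (\<Sum>y\<in>A \<inter> S. ennreal (riesz s (lagrange_basis S y)))"
proof -
  have sets: "sets \<mu> = sets borel"
    using reps_pos_sets[OF \<mu>] .
  have AE_S: "AE x in \<mu>. x \<in> S"
    using AE_in_msupp[OF sets] S(3) by (auto elim: eventually_mono)
  have point: "measure \<mu> {y} = riesz s (lagrange_basis S y)" if y: "y \<in> S" for y
  proof -
    have deg: "degree (lagrange_basis S y) \<le> n"
      using degree_lagrange_basis[OF S(1) y] S(2) by simp
    have "(\<integral>x. poly (lagrange_basis S y) x \<partial>\<mu>) = (\<integral>x. indicator {y} x \<partial>\<mu>)"
    proof (rule integral_cong_AE)
      show "poly (lagrange_basis S y) \<in> borel_measurable \<mu>"
        unfolding measurable_cong_sets[OF sets refl]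
        by (intro borel_measurable_continuous_onI continuous_on_poly continuous_on_id)
      show "(indicator {y} :: real \<Rightarrow> real) \<in> borel_measurable \<mu>"
        by (rule borel_measurable_indicator) (simp add: sets)
      show "AE x in \<mu>. poly (lagrange_basis S y) x = indicator {y} x"
        using AE_S
      proof eventually_elim
        case (elim x)
        then show ?case
          using poly_lagrange_basis[OF S(1) y] by (auto split: split_indicator)
      qed
    qed
    then show ?thesis
      using reps_pos_integral_poly(2)[OF \<mu> deg] by (simp add: reps_pos_space[OF \<mu>])
  qed
  have "emeasure \<mu> A = emeasure \<mu> (A \<inter> S)"
    using AE_S A sets by (intro emeasure_eq_AE) (auto simp: finite_imp_closed S(1))
  also have "\<dots> = (\<Sum>y\<in>A \<inter> S. emeasure \<mu> {y})"
    using S(1) sets by (intro emeasure_eq_sum_singleton) auto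
  also have "\<dots> = (\<Sum>y\<in>A \<inter> S. ennreal (riesz s (lagrange_basis S y)))"
    using point finite_measure.emeasure_eq_measure[OF reps_pos_finite_measure[OF \<mu>]] by simp
  finally show ?thesis .
qed

lemma reps_pos_eq_if_finite_support:
  assumes "\<mu> \<in> reps_pos n s" "\<nu> \<in> reps_pos n s"
    and "finite S" "card S \<le> n + 1" "msupp \<mu> \<subseteq> S" "msupp \<nu> \<subseteq> S"
  shows "\<mu> = \<nu>"
  using assms emeasure_reps_pos_finite_support[of _ n s S]
  by (intro measure_eqI) (auto simp: reps_pos_sets)

lemma reps_pos_common_interval:
  assumes "\<mu> \<in> reps_pos n s" "\<nu> \<in> reps_pos n s"
  obtains a b where "0 < a" "a < b" "msupp \<mu> \<subseteq> {a<..<b}" "msupp \<nu> \<subseteq> {a<..<b}"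
proof -
  obtain a1 b1 a2 b2 where "0 < a1" "a1 \<le> b1" "msupp \<mu> \<subseteq> {a1..b1}"
    and "0 < a2" "a2 \<le> b2" "msupp \<nu> \<subseteq> {a2..b2}"
    using assms unfolding reps_pos_def by blast
  moreover define a b where "a = min a1 a2 / 2" and "b = max b1 b2 + 1"
  ultimately have ab: "0 < a" "a < a1" "a < a2" "b1 < b" "b2 < b"
    by (auto simp: min_def max_def split: if_splits)
  then have "{a1..b1} \<subseteq> {a<..<b}" "{a2..b2} \<subseteq> {a<..<b}"
    by auto
  then have "msupp \<mu> \<subseteq> {a<..<b}" "msupp \<nu> \<subseteq> {a<..<b}"
    using \<open>msupp \<mu> \<subseteq> {a1..b1}\<close> \<open>msupp \<nu> \<subseteq> {a2..b2}\<close> by blast+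
  moreover have "a < b"
    using ab \<open>a1 \<le> b1\<close> by linarith
  ultimately show ?thesis
    using that[of a b] ab(1) by simp
qed

lemma ind_pos_le:
  assumes "\<mu> \<in> reps_pos n s" "finite (msupp \<mu>)"
  shows "ind_pos n s \<le> enat (card (msupp \<mu>))"
  unfolding ind_pos_def
  using INF_lower[OF assms(1), of "\<lambda>\<mu>. if finite (msupp \<mu>) then enat (card (msupp \<mu>)) else \<infinity>"] assms(2)
  by simp

lemma ind_pos_ge:
  assumes "\<And>\<mu>. \<mu> \<in> reps_pos n s \<Longrightarrow> finite (msupp \<mu>) \<Longrightarrow> m \<le> card (msupp \<mu>)"
  shows "enat m \<le> ind_pos n s"
  unfolding ind_pos_def by (rule INF_greatest) (use assms in auto)

lemma ind_pos_attained:
  assumes "ind_pos n s = enat m"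
  obtains \<mu> where "\<mu> \<in> reps_pos n s" "finite (msupp \<mu>)" "card (msupp \<mu>) = m"
proof -
  define A where "A = (\<lambda>\<mu>. if finite (msupp \<mu>) then enat (card (msupp \<mu>)) else \<infinity>) ` reps_pos n s"
  have "Inf A = enat m"
    using assms by (simp add: ind_pos_def A_def)
  moreover from this have "A \<noteq> {}"
    by (auto simp: top_enat_def)
  then have "Inf A \<in> A"
    by (auto intro: wellorder_InfI)
  ultimately obtain \<mu> where "\<mu> \<in> reps_pos n s"
    and "(if finite (msupp \<mu>) then enat (card (msupp \<mu>)) else \<infinity>) = enat m"
    unfolding A_def by auto
  then show ?thesis
    using that by (simp split: if_splits)
qed

lemma card_msupp_gt_if_strictly_positive:
  assumes sp: "strictly_positive_on n s a b" and \<mu>: "\<mu> \<in> reps_pos n s" and fin: "finite (msupp \<mu>)"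
  shows "n < 2 * card (msupp \<mu>)"
proof (rule ccontr)
  assume small: "\<not> n < 2 * card (msupp \<mu>)"
  define F where "F = (node_poly (msupp \<mu>))^2"
  have deg: "degree F \<le> n"
    using small fin by (simp add: F_def degree_power_eq degree_node_poly)
  moreover have "F \<noteq> 0" "\<forall>x\<in>{a..b}. 0 \<le> poly F x"
    by (simp_all add: F_def)
  ultimately have "0 < riesz s F"
    using sp unfolding strictly_positive_on_iff by blast
  moreover have "AE x in \<mu>. poly F x = 0"
    using AE_in_msupp[OF reps_pos_sets[OF \<mu>]]
    by eventually_elim (simp add: F_def poly_node_poly_eq_0_iff[OF fin])
  then have "(\<integral>x. poly F x \<partial>\<mu>) = 0"
    by (rule integral_eq_zero_AE)
  ultimately show False
    using reps_pos_integral_poly(2)[OF \<mu> deg] by simp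
qed

text \<open>If positivity is not strict, some nonzero nonnegative polynomial is annihilated, and every
  representing measure lives on its roots.\<close>
lemma finite_support_if_not_strictly_positive:
  assumes ns: "\<not> strictly_positive_pos n s" and ab: "0 < a" "a < b"
    and \<mu>: "\<mu> \<in> reps_pos n s" "msupp \<mu> \<subseteq> {a<..<b}"
  obtains S where "finite S" "2 * card S \<le> n"
    "\<And>\<nu>. \<nu> \<in> reps_pos n s \<Longrightarrow> msupp \<nu> \<subseteq> {a<..<b} \<Longrightarrow> msupp \<nu> \<subseteq> S"
proof -
  have pos: "positive_on n s a b"
    using \<mu> by (intro positive_on_if_reps_pos) auto
  moreover have "\<not> strictly_positive_on n s a b"
    using ns ab by (auto simp: strictly_positive_pos_def)
  ultimately obtain P where P: "degree P \<le> n" "\<forall>x\<in>{a..b}. 0 \<le> poly P x" "P \<noteq> 0"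
    and "\<not> 0 < riesz s P"
    unfolding strictly_positive_on_def by blast
  moreover have "0 \<le> riesz s P"
    using pos P(1,2) unfolding positive_on_def by blast
  ultimately have P0: "riesz s P = 0"
    by simp
  define S where "S = {x. a < x \<and> x < b \<and> poly P x = 0}"
  have "S \<subseteq> {a<..<b}" "\<forall>z\<in>S. poly P z = 0"
    unfolding S_def by auto
  then have S: "finite S" "2 * card S \<le> degree P"
    using card_interior_roots_le_half_degree[OF P(3,2)] by simp_all
  show ?thesis
  proof (rule that)
    show "finite S" "2 * card S \<le> n"
      using S P(1) by simp_all
  next
    fix \<nu> assume \<nu>: "\<nu> \<in> reps_pos n s" "msupp \<nu> \<subseteq> {a<..<b}"
    then have "\<forall>x\<in>msupp \<nu>. poly P x = 0"
      by (intro poly_eq_0_on_msupp_if_riesz_eq_0[OF _ _ P(1,2) P0]) auto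
    with \<nu>(2) show "msupp \<nu> \<subseteq> S"
      by (auto simp: S_def)
  qed
qed

lemma ind_pos_and_indeterminate_if_strictly_positive:
  assumes sp: "strictly_positive_on n s a b" and ab: "0 < a" "a < b"
  shows "ind_pos n s = enat (n div 2 + 1)" "indeterminate_pos n s"
proof -
  obtain Y1 w1 Y2 w2 where q: "quadrature_rule n s Y1 w1" "quadrature_rule n s Y2 w2"
    and Y: "Y1 \<subseteq> {a..b}" "Y2 \<subseteq> {a..b}" "card Y1 = n div 2 + 1" "b \<in> Y2" "b \<notin> Y1"
    using two_quadrature_rules[OF sp ab(2)] .
  have reps: "quadrature_measure Y1 w1 \<in> reps_pos n s" "quadrature_measure Y2 w2 \<in> reps_pos n s"
    using quadrature_measure_in_reps_pos[OF q(1) Y(1)] quadrature_measure_in_reps_pos[OF q(2) Y(2)] ab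
    by simp_all
  have supp: "msupp (quadrature_measure Y1 w1) = Y1" "msupp (quadrature_measure Y2 w2) = Y2"
    using q by (simp_all add: quadrature_rule_def msupp_quadrature_measure)
  have "finite Y1"
    using q(1) by (simp add: quadrature_rule_def)
  then have "ind_pos n s \<le> enat (n div 2 + 1)"
    using ind_pos_le[OF reps(1)] supp(1) Y(3) by simp
  moreover have "enat (n div 2 + 1) \<le> ind_pos n s"
  proof (rule ind_pos_ge)
    fix \<mu> assume "\<mu> \<in> reps_pos n s" "finite (msupp \<mu>)"
    then have "n < 2 * card (msupp \<mu>)"
      by (rule card_msupp_gt_if_strictly_positive[OF sp])
    then show "n div 2 + 1 \<le> card (msupp \<mu>)"
      by presburger
  qed
  ultimately show "ind_pos n s = enat (n div 2 + 1)"
    by simp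
  have "quadrature_measure Y1 w1 \<noteq> quadrature_measure Y2 w2"
    using supp Y(4,5) by auto
  with reps show "indeterminate_pos n s"
    unfolding indeterminate_pos_def by blast
qed

lemma strictly_positive_if_ind_pos_eq:
  assumes "ind_pos n s = enat (n div 2 + 1)"
  shows "strictly_positive_pos n s"
proof (rule ccontr)
  assume ns: "\<not> strictly_positive_pos n s"
  obtain \<mu> where \<mu>: "\<mu> \<in> reps_pos n s" "finite (msupp \<mu>)" "card (msupp \<mu>) = n div 2 + 1"
    using ind_pos_attained[OF assms] .
  obtain a b where ab: "0 < a" "a < b" "msupp \<mu> \<subseteq> {a<..<b}"
    by (rule reps_pos_common_interval[OF \<mu>(1) \<mu>(1)])
  obtain S where S: "finite S" "2 * card S \<le> n"
    and supp_S: "\<And>\<nu>. \<nu> \<in> reps_pos n s \<Longrightarrow> msupp \<nu> \<subseteq> {a<..<b} \<Longrightarrow> msupp \<nu> \<subseteq> S"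
    using finite_support_if_not_strictly_positive[OF ns ab(1,2) \<mu>(1) ab(3)] by metis
  have "card (msupp \<mu>) \<le> card S"
    using card_mono[OF S(1) supp_S[OF \<mu>(1) ab(3)]] .
  with S(2) \<mu>(3) have "2 * (n div 2 + 1) \<le> n"
    by linarith
  then show False
    by presburger
qed

lemma strictly_positive_if_indeterminate:
  assumes "indeterminate_pos n s"
  shows "strictly_positive_pos n s"
proof (rule ccontr)
  assume ns: "\<not> strictly_positive_pos n s"
  obtain \<mu> \<nu> where \<mu>\<nu>: "\<mu> \<in> reps_pos n s" "\<nu> \<in> reps_pos n s" "\<mu> \<noteq> \<nu>"
    using assms unfolding indeterminate_pos_def by blast
  obtain a b where ab: "0 < a" "a < b" "msupp \<mu> \<subseteq> {a<..<b}" "msupp \<nu> \<subseteq> {a<..<b}"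
    by (rule reps_pos_common_interval[OF \<mu>\<nu>(1,2)])
  obtain S where S: "finite S" "2 * card S \<le> n"
    and supp_S: "\<And>\<nu>. \<nu> \<in> reps_pos n s \<Longrightarrow> msupp \<nu> \<subseteq> {a<..<b} \<Longrightarrow> msupp \<nu> \<subseteq> S"
    using finite_support_if_not_strictly_positive[OF ns ab(1,2) \<mu>\<nu>(1) ab(3)] by metis
  have "\<mu> = \<nu>"
    using S supp_S[OF \<mu>\<nu>(1) ab(3)] supp_S[OF \<mu>\<nu>(2) ab(4)]
    by (intro reps_pos_eq_if_finite_support[OF \<mu>\<nu>(1,2)]) auto
  with \<mu>\<nu>(3) show False ..
qed

lemma nat_ceiling_Suc_half: "nat \<lceil>real (n + 1) / 2\<rceil> = n div 2 + 1"
proof -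
  have "real n = 2 * real (n div 2) + real (n mod 2)"
    by (metis of_nat_add of_nat_mult div_mult_mod_eq mult.commute of_nat_numeral)
  moreover have "n mod 2 = 0 \<or> n mod 2 = 1"
    by auto
  then have "real (n mod 2) = 0 \<or> real (n mod 2) = 1"
    by auto
  ultimately have "\<lceil>real (n + 1) / 2\<rceil> = int (n div 2 + 1)"
    unfolding ceiling_eq_iff by auto
  then show ?thesis
    by simp
qed

theorem theorem4p6:
  fixes n :: nat and s :: "nat \<Rightarrow> real"
  assumes nonneg: "\<forall>k\<le>n. s k \<ge> 0"
    and pos: "positive_pos n s"
  shows "(strictly_positive_pos n s \<longleftrightarrow> ind_pos n s = enat (nat \<lceil>real (n + 1) / 2\<rceil>))
       \<and> (ind_pos n s = enat (nat \<lceil>real (n + 1) / 2\<rceil>) \<longleftrightarrow> indeterminate_pos n s)"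
proof -
  have "ind_pos n s = enat (n div 2 + 1) \<and> indeterminate_pos n s" if sp: "strictly_positive_pos n s"
  proof -
    obtain a b where "0 < a" "a < b" "strictly_positive_on n s a b"
      using sp unfolding strictly_positive_pos_def by blast
    then show ?thesis
      using ind_pos_and_indeterminate_if_strictly_positive by blast
  qed
  then show ?thesis
    unfolding nat_ceiling_Suc_half
    using strictly_positive_if_ind_pos_eq[of n s] strictly_positive_if_indeterminate[of n s] by blast
qed

end
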